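(* Let $\mathcal V$ be a congruence modular variety with difference term $d$, $A\in\mathcal V$ and $\alpha\in\operatorname{Con}A$ (arbitrary). Let $B=A(\alpha)/\Delta_{\alpha1}$ with binary operation $x+y:=d^B(x,0,y)$, where $0$ is the $\Delta_{\alpha1}$-class containing the diagonal. Then there exist maps $T_f:(A/\alpha)^{\operatorname{ar}f}\to B$ ($f\in\tau$) such that \[A/[\alpha,1_A]\cong B\otimes^{T}A/\alpha.\]
   Context: All algebras are in the sense of universal algebra, with signature $\tau$. For $\alpha,\beta\in\operatorname{Con}A$, $[\alpha,\beta]$ is the term-condition (TC) commutator; $1_A$ is the total relation. $A(\alpha)=\{(x,y)\in A\times A:(x,y)\in\alpha\}$ is $\alpha$ viewed as a subalgebra of $A\times A$; $\Delta_{\alpha\beta}$ is the congruence of $A(\alpha)$ generated by $\{((u,u),(v,v)):(u,v)\in\beta\}$. A difference term for $\mathcal V$ is a ternary term $d$ such that for every $A\in\mathcal V$, $\theta\in\operatorname{Con}A$, $(a,b)\in\theta$: $d(a,a,b)=b$ and $(d(a,b,b),a)\in[\theta,\theta]$ (every congruence modular variety has one). Given algebras $B,Q$ in the same signature $\tau$, a binary operation $+$ on $B$, and maps $T_f:Q^{\operatorname{ar}f}\to B$ ($f\in\tau$), the algebra $B\otimes^{T}Q$ has universe $B\times Q$ and operations $F_f((b_1,q_1),\dots,(b_n,q_n))=\big(f^B(b_1,\dots,b_n)+T_f(q_1,\dots,q_n),\,f^Q(q_1,\dots,q_n)\big)$. *)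

theory Defs
  imports Main
begin

text \<open>An algebra is a nonempty carrier A together with an interpretation F of the symbols
  (F f is only meaningful on lists of length ar f with entries in A).\<close>

datatype ('f, 'v) trm = Var 'v | Op 'f "('f, 'v) trm list"

fun eval :: "('f \<Rightarrow> 'a list \<Rightarrow> 'a) \<Rightarrow> ('v \<Rightarrow> 'a) \<Rightarrow> ('f, 'v) trm \<Rightarrow> 'a" where
  "eval F \<sigma> (Var v) = \<sigma> v"
| "eval F \<sigma> (Op f ts) = F f (map (eval F \<sigma>) ts)"

fun wf_trm :: "('f \<Rightarrow> nat) \<Rightarrow> ('f, 'v) trm \<Rightarrow> bool" where
  "wf_trm ar (Var v) = True"
| "wf_trm ar (Op f ts) = (length ts = ar f \<and> (\<forall>t\<in>set ts. wf_trm ar t))"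

definition is_alg :: "('f \<Rightarrow> nat) \<Rightarrow> 'a set \<Rightarrow> ('f \<Rightarrow> 'a list \<Rightarrow> 'a) \<Rightarrow> bool" where
  "is_alg ar A F \<equiv> A \<noteq> {} \<and> (\<forall>f xs. length xs = ar f \<and> set xs \<subseteq> A \<longrightarrow> F f xs \<in> A)"

definition sat_id :: "'a set \<Rightarrow> ('f \<Rightarrow> 'a list \<Rightarrow> 'a) \<Rightarrow> ('f, nat) trm \<Rightarrow> ('f, nat) trm \<Rightarrow> bool" where
  "sat_id A F s t \<equiv> \<forall>\<sigma>. range \<sigma> \<subseteq> A \<longrightarrow> eval F \<sigma> s = eval F \<sigma> t"

definition is_model :: "('f \<Rightarrow> nat) \<Rightarrow> (('f, nat) trm \<times> ('f, nat) trm) set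
    \<Rightarrow> 'a set \<Rightarrow> ('f \<Rightarrow> 'a list \<Rightarrow> 'a) \<Rightarrow> bool" where
  "is_model ar Eqs A F \<equiv> is_alg ar A F \<and> (\<forall>(s, t) \<in> Eqs. sat_id A F s t)"

definition is_con :: "('f \<Rightarrow> nat) \<Rightarrow> 'a set \<Rightarrow> ('f \<Rightarrow> 'a list \<Rightarrow> 'a) \<Rightarrow> 'a rel \<Rightarrow> bool" where
  "is_con ar A F \<theta> \<equiv> \<theta> \<subseteq> A \<times> A \<and> (\<forall>x\<in>A. (x, x) \<in> \<theta>) \<and> sym \<theta> \<and> trans \<theta> \<and>
     (\<forall>f xs ys. length xs = ar f \<and> length ys = ar f \<and> list_all2 (\<lambda>x y. (x, y) \<in> \<theta>) xs ys
        \<longrightarrow> (F f xs, F f ys) \<in> \<theta>)"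

definition Cg :: "('f \<Rightarrow> nat) \<Rightarrow> 'a set \<Rightarrow> ('f \<Rightarrow> 'a list \<Rightarrow> 'a) \<Rightarrow> 'a rel \<Rightarrow> 'a rel" where
  "Cg ar A F R \<equiv> \<Inter>{\<theta>. is_con ar A F \<theta> \<and> R \<subseteq> \<theta>}"

definition con_join :: "('f \<Rightarrow> nat) \<Rightarrow> 'a set \<Rightarrow> ('f \<Rightarrow> 'a list \<Rightarrow> 'a) \<Rightarrow> 'a rel \<Rightarrow> 'a rel \<Rightarrow> 'a rel" where
  "con_join ar A F \<theta> \<psi> \<equiv> Cg ar A F (\<theta> \<union> \<psi>)"

definition modular_con :: "('f \<Rightarrow> nat) \<Rightarrow> 'a set \<Rightarrow> ('f \<Rightarrow> 'a list \<Rightarrow> 'a) \<Rightarrow> bool" where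
  "modular_con ar A F \<equiv> \<forall>\<alpha> \<beta> \<gamma>. is_con ar A F \<alpha> \<and> is_con ar A F \<beta> \<and> is_con ar A F \<gamma> \<and> \<alpha> \<subseteq> \<gamma>
      \<longrightarrow> con_join ar A F \<alpha> \<beta> \<inter> \<gamma> = con_join ar A F \<alpha> (\<beta> \<inter> \<gamma>)"

text \<open>Term condition C(alpha, beta; delta): for every term t(x,y) (variables Inl i are the x's,
  Inr j the y's), a alpha b componentwise and c beta d componentwise:
  t(a,c) delta t(a,d) implies t(b,c) delta t(b,d).\<close>
definition term_cond :: "('f \<Rightarrow> nat) \<Rightarrow> ('f \<Rightarrow> 'a list \<Rightarrow> 'a) \<Rightarrow> 'a rel \<Rightarrow> 'a rel \<Rightarrow> 'a rel \<Rightarrow> bool" where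
  "term_cond ar F \<alpha> \<beta> \<delta> \<equiv> \<forall>(t :: ('f, nat + nat) trm) a b c d.
      wf_trm ar t \<and> (\<forall>i. (a i, b i) \<in> \<alpha>) \<and> (\<forall>j. (c j, d j) \<in> \<beta>) \<and>
      (eval F (case_sum a c) t, eval F (case_sum a d) t) \<in> \<delta>
      \<longrightarrow> (eval F (case_sum b c) t, eval F (case_sum b d) t) \<in> \<delta>"

definition commutator :: "('f \<Rightarrow> nat) \<Rightarrow> 'a set \<Rightarrow> ('f \<Rightarrow> 'a list \<Rightarrow> 'a) \<Rightarrow> 'a rel \<Rightarrow> 'a rel \<Rightarrow> 'a rel" where
  "commutator ar A F \<alpha> \<beta> \<equiv> \<Inter>{\<delta>. is_con ar A F \<delta> \<and> term_cond ar F \<alpha> \<beta> \<delta>}"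

definition app3 :: "('f \<Rightarrow> 'a list \<Rightarrow> 'a) \<Rightarrow> ('f, nat) trm \<Rightarrow> 'a \<Rightarrow> 'a \<Rightarrow> 'a \<Rightarrow> 'a" where
  "app3 F d x y z \<equiv> eval F (\<lambda>i. if i = 0 then x else if i = 1 then y else z) d"

text \<open>The variety Mod(Eqs) is congruence modular -- restricted to algebras whose carrier lives
  in the type 'b (HOL cannot quantify over types inside a formula).\<close>
definition cm_at :: "('f \<Rightarrow> nat) \<Rightarrow> (('f, nat) trm \<times> ('f, nat) trm) set \<Rightarrow> 'b itself \<Rightarrow> bool" where
  "cm_at ar Eqs (T :: 'b itself) \<equiv>
     \<forall>(B :: 'b set) G. is_model ar Eqs B G \<longrightarrow> modular_con ar B G"

definition diff_term_at :: "('f \<Rightarrow> nat) \<Rightarrow> (('f, nat) trm \<times> ('f, nat) trm) set \<Rightarrow> ('f, nat) trm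
    \<Rightarrow> 'b itself \<Rightarrow> bool" where
  "diff_term_at ar Eqs d (T :: 'b itself) \<equiv>
     \<forall>(B :: 'b set) G \<theta> a b. is_model ar Eqs B G \<and> is_con ar B G \<theta> \<and> (a, b) \<in> \<theta> \<longrightarrow>
        app3 G d a a b = b \<and> (app3 G d a b b, a) \<in> commutator ar B G \<theta> \<theta>"

text \<open>Operations of A(alpha) (carrier alpha, a subalgebra of A x A).\<close>
definition pair_ops :: "('f \<Rightarrow> 'a list \<Rightarrow> 'a) \<Rightarrow> 'f \<Rightarrow> ('a \<times> 'a) list \<Rightarrow> 'a \<times> 'a" where
  "pair_ops F f ps \<equiv> (F f (map fst ps), F f (map snd ps))"

definition quot_ops :: "('f \<Rightarrow> 'a list \<Rightarrow> 'a) \<Rightarrow> 'a rel \<Rightarrow> 'f \<Rightarrow> 'a set list \<Rightarrow> 'a set" where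
  "quot_ops F \<theta> f Xs \<equiv> \<theta> `` {F f (map (\<lambda>X. SOME x. x \<in> X) Xs)}"

definition Delta1 :: "('f \<Rightarrow> nat) \<Rightarrow> 'a set \<Rightarrow> ('f \<Rightarrow> 'a list \<Rightarrow> 'a) \<Rightarrow> 'a rel \<Rightarrow> ('a \<times> 'a) rel" where
  "Delta1 ar A F \<alpha> \<equiv> Cg ar \<alpha> (pair_ops F) {((u, u), (v, v)) | u v. (u, v) \<in> A \<times> A}"

definition diag_class :: "'a set \<Rightarrow> 'a rel \<Rightarrow> ('a \<times> 'a) rel \<Rightarrow> ('a \<times> 'a) set" where
  "diag_class A \<alpha> \<Delta> \<equiv> THE X. X \<in> \<alpha> // \<Delta> \<and> (\<forall>u\<in>A. (u, u) \<in> X)"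

definition tensor_ops :: "('f \<Rightarrow> 'b list \<Rightarrow> 'b) \<Rightarrow> ('b \<Rightarrow> 'b \<Rightarrow> 'b) \<Rightarrow> ('f \<Rightarrow> 'q list \<Rightarrow> 'b)
    \<Rightarrow> ('f \<Rightarrow> 'q list \<Rightarrow> 'q) \<Rightarrow> 'f \<Rightarrow> ('b \<times> 'q) list \<Rightarrow> 'b \<times> 'q" where
  "tensor_ops FB pl T FQ f ps \<equiv>
     (pl (FB f (map fst ps)) (T f (map snd ps)), FQ f (map snd ps))"

definition iso :: "('f \<Rightarrow> nat) \<Rightarrow> 'a set \<Rightarrow> ('f \<Rightarrow> 'a list \<Rightarrow> 'a) \<Rightarrow> 'b set \<Rightarrow> ('f \<Rightarrow> 'b list \<Rightarrow> 'b) \<Rightarrow> bool" where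
  "iso ar A F B G \<equiv> \<exists>h. bij_betw h A B \<and>
     (\<forall>f xs. length xs = ar f \<and> set xs \<subseteq> A \<longrightarrow> h (F f xs) = G f (map h xs))"

end

(*
  For (x, w) in alpha one has ((x, w), (y, w)) in Delta iff (x, y) in [alpha, 1].
  If x [alpha, 1] y, this follows because ((x, x), (y, x)) in Delta defines a congruence of A
  satisfying the term condition C(alpha, 1; -); here modularity enters through the Shifting Lemma
  in A(alpha) for the kernels of the two projections. Conversely, d is affine modulo [alpha, 1]
  on alpha-related arguments, so (a, b) R (c, e) iff d(a, b, e) [alpha, 1] c is a congruence of
  A(alpha) containing the generators of Delta.
  Choosing a representative x' of each alpha-class, x |-> ([(x, x')], [x]) therefore induces a
  bijection of A / [alpha, 1] onto B x A / alpha. Since [(x, y)] + [(y, z)] = [(x, z)] in B, it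
  becomes a homomorphism once the operations are twisted by the factor set
  T_f(q) = [(f(reps of q), rep of f(q))].
*)

theory Submission
  imports Defs
begin

section \<open>Congruences and quotient algebras\<close>

lemma con_subset: "is_con ar A F \<theta> \<Longrightarrow> \<theta> \<subseteq> A \<times> A"
  unfolding is_con_def by blast

lemma con_memD: "is_con ar A F \<theta> \<Longrightarrow> (x, y) \<in> \<theta> \<Longrightarrow> x \<in> A \<and> y \<in> A"
  unfolding is_con_def by blast

lemma con_refl: "is_con ar A F \<theta> \<Longrightarrow> x \<in> A \<Longrightarrow> (x, x) \<in> \<theta>"
  unfolding is_con_def by blast

lemma con_sym: "is_con ar A F \<theta> \<Longrightarrow> (x, y) \<in> \<theta> \<Longrightarrow> (y, x) \<in> \<theta>"
  unfolding is_con_def sym_def by blast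

lemma con_trans: "is_con ar A F \<theta> \<Longrightarrow> (x, y) \<in> \<theta> \<Longrightarrow> (y, z) \<in> \<theta> \<Longrightarrow> (x, z) \<in> \<theta>"
  unfolding is_con_def trans_def by blast

lemma con_compat:
  "is_con ar A F \<theta> \<Longrightarrow> length xs = ar f \<Longrightarrow> length ys = ar f \<Longrightarrow>
   (\<And>i. i < ar f \<Longrightarrow> (xs ! i, ys ! i) \<in> \<theta>) \<Longrightarrow> (F f xs, F f ys) \<in> \<theta>"
  unfolding is_con_def by (auto simp: list_all2_conv_all_nth)

lemma con_Image_eq: "is_con ar A F \<theta> \<Longrightarrow> (x, y) \<in> \<theta> \<Longrightarrow> \<theta> `` {x} = \<theta> `` {y}"
  unfolding is_con_def sym_def trans_def by blast

lemma con_Image_eqD: "is_con ar A F \<theta> \<Longrightarrow> x \<in> A \<Longrightarrow> \<theta> `` {x} = \<theta> `` {y} \<Longrightarrow> (y, x) \<in> \<theta>"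
  by (metis Image_singleton_iff con_refl)

lemma is_conI:
  assumes "\<theta> \<subseteq> A \<times> A" "\<And>x. x \<in> A \<Longrightarrow> (x, x) \<in> \<theta>"
    and "\<And>x y. (x, y) \<in> \<theta> \<Longrightarrow> (y, x) \<in> \<theta>"
    and "\<And>x y z. (x, y) \<in> \<theta> \<Longrightarrow> (y, z) \<in> \<theta> \<Longrightarrow> (x, z) \<in> \<theta>"
    and "\<And>f xs ys. length xs = ar f \<Longrightarrow> length ys = ar f \<Longrightarrow>
           (\<forall>i<ar f. (xs ! i, ys ! i) \<in> \<theta>) \<Longrightarrow> (F f xs, F f ys) \<in> \<theta>"
  shows "is_con ar A F \<theta>"
  unfolding is_con_def sym_def trans_def list_all2_conv_all_nth
  by (intro conjI; (fact assms(1))?; (simp add: assms(2,5))?) (blast intro: assms(3,4))+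

lemma con_Inter:
  assumes "S \<noteq> {}" and con: "\<And>\<theta>. \<theta> \<in> S \<Longrightarrow> is_con ar A F \<theta>"
  shows "is_con ar A F (\<Inter>S)"
proof (rule is_conI)
  show "\<Inter>S \<subseteq> A \<times> A"
    using assms con_subset by blast
  show "(x, x) \<in> \<Inter>S" if "x \<in> A" for x
    using that con_refl[OF con] by blast
  show "(y, x) \<in> \<Inter>S" if "(x, y) \<in> \<Inter>S" for x y
    using that con_sym[OF con] by blast
  show "(x, z) \<in> \<Inter>S" if "(x, y) \<in> \<Inter>S" "(y, z) \<in> \<Inter>S" for x y z
    using that con_trans[OF con] by blast
  show "(F f xs, F f ys) \<in> \<Inter>S"
    if "length xs = ar f" "length ys = ar f" "\<forall>i<ar f. (xs ! i, ys ! i) \<in> \<Inter>S" for f xs ys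
  proof
    fix \<theta> assume "\<theta> \<in> S"
    with that show "(F f xs, F f ys) \<in> \<theta>"
      by (intro con_compat[OF con]) auto
  qed
qed

lemma con_Int: "is_con ar A F \<theta> \<Longrightarrow> is_con ar A F \<psi> \<Longrightarrow> is_con ar A F (\<theta> \<inter> \<psi>)"
  using con_Inter[of "{\<theta>, \<psi>}"] by auto

lemma alg_op: "is_alg ar A F \<Longrightarrow> length xs = ar f \<Longrightarrow> set xs \<subseteq> A \<Longrightarrow> F f xs \<in> A"
  unfolding is_alg_def by blast

lemma alg_total_con:
  assumes "is_alg ar A F"
  shows "is_con ar A F (A \<times> A)"
proof (rule is_conI)
  show "(F f xs, F f ys) \<in> A \<times> A"
    if "length xs = ar f" "length ys = ar f" "\<forall>i<ar f. (xs ! i, ys ! i) \<in> A \<times> A" for f xs ys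
    using that by (auto intro!: alg_op[OF assms] simp: in_set_conv_nth)
qed auto

lemma eval_closed:
  assumes "is_alg ar A F"
  shows "wf_trm ar t \<Longrightarrow> (\<And>v. \<sigma> v \<in> A) \<Longrightarrow> eval F \<sigma> t \<in> A"
proof (induction t)
  case (Op f ts)
  then have "set (map (eval F \<sigma>) ts) \<subseteq> A"
    by auto
  with Op.prems show ?case
    by (simp add: alg_op[OF assms])
qed simp

lemma eval_con:
  assumes "is_con ar A F \<theta>"
  shows "wf_trm ar t \<Longrightarrow> (\<And>v. (\<sigma> v, \<tau> v) \<in> \<theta>) \<Longrightarrow> (eval F \<sigma> t, eval F \<tau> t) \<in> \<theta>"
proof (induction t)
  case (Op f ts)
  then have "(map (eval F \<sigma>) ts ! i, map (eval F \<tau>) ts ! i) \<in> \<theta>" if "i < ar f" for i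
    using that by (simp add: nth_mem)
  with Op.prems show ?case
    by (simp add: con_compat[OF assms])
qed simp

lemma app3_closed:
  "is_alg ar A F \<Longrightarrow> wf_trm ar d \<Longrightarrow> x \<in> A \<Longrightarrow> y \<in> A \<Longrightarrow> z \<in> A \<Longrightarrow> app3 F d x y z \<in> A"
  unfolding app3_def by (rule eval_closed) auto

lemma app3_con:
  "is_con ar A F \<theta> \<Longrightarrow> wf_trm ar d \<Longrightarrow> (x, x') \<in> \<theta> \<Longrightarrow> (y, y') \<in> \<theta> \<Longrightarrow> (z, z') \<in> \<theta> \<Longrightarrow>
   (app3 F d x y z, app3 F d x' y' z') \<in> \<theta>"
  unfolding app3_def by (rule eval_con) auto

lemma Cg_is_con:
  assumes "is_alg ar A F" "R \<subseteq> A \<times> A"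
  shows "is_con ar A F (Cg ar A F R)"
  unfolding Cg_def using assms alg_total_con[OF assms(1)] by (intro con_Inter) auto

lemma Cg_subset: "R \<subseteq> Cg ar A F R"
  unfolding Cg_def by blast

lemma Cg_least: "is_con ar A F \<theta> \<Longrightarrow> R \<subseteq> \<theta> \<Longrightarrow> Cg ar A F R \<subseteq> \<theta>"
  unfolding Cg_def by blast

definition rep :: "'a set \<Rightarrow> 'a" where
  "rep X = (SOME x. x \<in> X)"

lemma rep_Image:
  assumes "is_con ar A F \<theta>" "x \<in> A"
  shows "(x, rep (\<theta> `` {x})) \<in> \<theta>"
proof -
  have "x \<in> \<theta> `` {x}"
    using con_refl[OF assms] by simp
  then have "rep (\<theta> `` {x}) \<in> \<theta> `` {x}"
    unfolding rep_def by (rule someI)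
  then show ?thesis
    by simp
qed

lemma rep_quotient:
  assumes "is_con ar A F \<theta>" "X \<in> A // \<theta>"
  shows "rep X \<in> A" "X = \<theta> `` {rep X}"
proof -
  obtain x where x: "X = \<theta> `` {x}" "x \<in> A"
    using assms(2) by (rule quotientE)
  with rep_Image[OF assms(1)] have "(x, rep X) \<in> \<theta>"
    by simp
  with x show "rep X \<in> A" "X = \<theta> `` {rep X}"
    using con_memD[OF assms(1)] con_Image_eq[OF assms(1)] by auto
qed

lemma quot_ops_rep: "quot_ops F \<theta> f Xs = \<theta> `` {F f (map rep Xs)}"
  unfolding quot_ops_def rep_def[abs_def] ..

lemma quot_ops_Image:
  assumes "is_con ar A F \<theta>" "length xs = ar f" "set xs \<subseteq> A"
  shows "quot_ops F \<theta> f (map (\<lambda>x. \<theta> `` {x}) xs) = \<theta> `` {F f xs}"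
proof -
  have "(xs ! i, rep (\<theta> `` {xs ! i})) \<in> \<theta>" if "i < ar f" for i
    using that assms by (intro rep_Image[OF assms(1)]) auto
  then have "(F f xs, F f (map rep (map (\<lambda>x. \<theta> `` {x}) xs))) \<in> \<theta>"
    using assms(2) by (intro con_compat[OF assms(1)]) auto
  then show ?thesis
    unfolding quot_ops_rep by (rule con_Image_eq[OF assms(1), symmetric])
qed

lemma eval_quot_ops:
  assumes "is_alg ar A F" "is_con ar A F \<theta>" "\<And>v. \<sigma> v \<in> A"
  shows "wf_trm ar t \<Longrightarrow> eval (quot_ops F \<theta>) (\<lambda>v. \<theta> `` {\<sigma> v}) t = \<theta> `` {eval F \<sigma> t}"
proof (induction t)
  case (Op f ts)
  then have args: "map (eval (quot_ops F \<theta>) (\<lambda>v. \<theta> `` {\<sigma> v})) ts =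
      map (\<lambda>x. \<theta> `` {x}) (map (eval F \<sigma>) ts)"
    by simp
  have "eval (quot_ops F \<theta>) (\<lambda>v. \<theta> `` {\<sigma> v}) (Op f ts) =
      quot_ops F \<theta> f (map (\<lambda>x. \<theta> `` {x}) (map (eval F \<sigma>) ts))"
    by (simp only: eval.simps args)
  also have "\<dots> = \<theta> `` {F f (map (eval F \<sigma>) ts)}"
    using Op.prems eval_closed[OF assms(1)] assms(3) by (intro quot_ops_Image[OF assms(2)]) auto
  finally show ?case
    by simp
qed simp

lemma app3_quot_ops:
  assumes "is_alg ar A F" "is_con ar A F \<theta>" "wf_trm ar d" "x \<in> A" "y \<in> A" "z \<in> A"
  shows "app3 (quot_ops F \<theta>) d (\<theta> `` {x}) (\<theta> `` {y}) (\<theta> `` {z}) = \<theta> `` {app3 F d x y z}"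
proof -
  have classes: "(\<lambda>i. if i = 0 then \<theta> `` {x} else if i = 1 then \<theta> `` {y} else \<theta> `` {z}) =
      (\<lambda>i. \<theta> `` {if i = 0 then x else if i = 1 then y else z})"
    by (rule ext) simp
  show ?thesis
    unfolding app3_def classes using assms by (intro eval_quot_ops) auto
qed

lemma iso_quotientI:
  assumes con: "is_con ar A F \<theta>" and alg: "is_alg ar A F" and onto: "h ` A = B"
    and ker: "\<And>x y. x \<in> A \<Longrightarrow> y \<in> A \<Longrightarrow> h x = h y \<longleftrightarrow> (x, y) \<in> \<theta>"
    and hom: "\<And>f xs. length xs = ar f \<Longrightarrow> set xs \<subseteq> A \<Longrightarrow> h (F f xs) = G f (map h xs)"
  shows "iso ar (A // \<theta>) (quot_ops F \<theta>) B G"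
  unfolding iso_def
proof (intro exI conjI allI impI)
  let ?h = "\<lambda>X. h (rep X)"
  have h_Image: "?h (\<theta> `` {x}) = h x" if "x \<in> A" for x
  proof -
    have "(x, rep (\<theta> `` {x})) \<in> \<theta>"
      by (rule rep_Image[OF con that])
    then show ?thesis
      using ker[OF that, of "rep (\<theta> `` {x})"] con_memD[OF con] by auto
  qed
  show "bij_betw ?h (A // \<theta>) B"
  proof (rule bij_betw_imageI)
    show "inj_on ?h (A // \<theta>)"
    proof (rule inj_onI)
      fix X Y assume "X \<in> A // \<theta>" "Y \<in> A // \<theta>" "?h X = ?h Y"
      then show "X = Y"
        using ker rep_quotient[OF con] con_Image_eq[OF con] by metis
    qed
    show "?h ` (A // \<theta>) = B"
      using onto h_Image by (force elim!: quotientE intro: quotientI)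
  qed
  fix f xs assume xs: "length xs = ar f \<and> set xs \<subseteq> A // \<theta>"
  then have "set (map rep xs) \<subseteq> A"
    using rep_quotient(1)[OF con] by auto
  with xs show "?h (quot_ops F \<theta> f xs) = G f (map ?h xs)"
    unfolding quot_ops_rep by (simp add: h_Image alg_op[OF alg] hom comp_def)
qed

section \<open>Terms and the algebra \<open>A(\<alpha>)\<close>\<close>

fun subst :: "('v \<Rightarrow> ('f, 'w) trm) \<Rightarrow> ('f, 'v) trm \<Rightarrow> ('f, 'w) trm" where
  "subst s (Var v) = s v"
| "subst s (Op f ts) = Op f (map (subst s) ts)"

lemma eval_subst: "eval F \<sigma> (subst s t) = eval F (\<lambda>v. eval F \<sigma> (s v)) t"
  by (induction t) (simp_all cong: map_cong)

lemma wf_subst: "wf_trm ar t \<Longrightarrow> (\<And>v. wf_trm ar (s v)) \<Longrightarrow> wf_trm ar (subst s t)"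
  by (induction t) auto

definition app3_trm :: "('f, nat) trm \<Rightarrow> ('f, 'v) trm \<Rightarrow> ('f, 'v) trm \<Rightarrow> ('f, 'v) trm \<Rightarrow> ('f, 'v) trm" where
  "app3_trm d x y z = subst (\<lambda>i. if i = 0 then x else if i = 1 then y else z) d"

lemma eval_app3_trm:
  "eval F \<sigma> (app3_trm d x y z) = app3 F d (eval F \<sigma> x) (eval F \<sigma> y) (eval F \<sigma> z)"
proof -
  have args: "(\<lambda>i. eval F \<sigma> (if i = 0 then x else if i = 1 then y else z)) =
      (\<lambda>i. if i = 0 then eval F \<sigma> x else if i = 1 then eval F \<sigma> y else eval F \<sigma> z)"
    by (rule ext) simp
  show ?thesis
    unfolding app3_trm_def eval_subst app3_def args ..
qed

lemma wf_app3_trm: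
  "wf_trm ar d \<Longrightarrow> wf_trm ar x \<Longrightarrow> wf_trm ar y \<Longrightarrow> wf_trm ar z \<Longrightarrow> wf_trm ar (app3_trm d x y z)"
  unfolding app3_trm_def by (rule wf_subst) auto

lemma eval_pair_ops: "eval (pair_ops F) \<sigma> t = (eval F (fst \<circ> \<sigma>) t, eval F (snd \<circ> \<sigma>) t)"
  by (induction t) (simp_all add: pair_ops_def comp_def cong: map_cong)

lemma app3_pair_ops:
  "app3 (pair_ops F) d (x, x') (y, y') (z, z') = (app3 F d x y z, app3 F d x' y' z')"
proof -
  have components: "fst \<circ> (\<lambda>i. if i = 0 then (x, x') else if i = 1 then (y, y') else (z, z')) =
      (\<lambda>i. if i = 0 then x else if i = 1 then y else z)"
    "snd \<circ> (\<lambda>i. if i = 0 then (x, x') else if i = 1 then (y, y') else (z, z')) =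
      (\<lambda>i. if i = 0 then x' else if i = 1 then y' else z')"
    by auto
  show ?thesis
    unfolding app3_def eval_pair_ops components ..
qed

lemma eval_pair_ops_case_sum:
  "eval (pair_ops F) (case_sum (\<lambda>i. (a i, b i)) (\<lambda>j. (c j, e j))) t =
    (eval F (case_sum a c) t, eval F (case_sum b e) t)"
proof -
  have "fst \<circ> case_sum (\<lambda>i. (a i, b i)) (\<lambda>j. (c j, e j)) = case_sum a c"
    "snd \<circ> case_sum (\<lambda>i. (a i, b i)) (\<lambda>j. (c j, e j)) = case_sum b e"
    by (auto split: sum.split)
  then show ?thesis
    by (simp only: eval_pair_ops)
qed

lemma pair_ops_alg:
  assumes "is_alg ar A F" "is_con ar A F \<alpha>"
  shows "is_alg ar \<alpha> (pair_ops F)"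
  unfolding is_alg_def
proof (intro conjI allI impI)
  show "\<alpha> \<noteq> {}"
    using assms con_refl unfolding is_alg_def by fast
  fix f ps assume ps: "length ps = ar f \<and> set ps \<subseteq> \<alpha>"
  then have "(map fst ps ! i, map snd ps ! i) \<in> \<alpha>" if "i < ar f" for i
    using that by (auto dest: nth_mem)
  with ps show "pair_ops F f ps \<in> \<alpha>"
    unfolding pair_ops_def by (intro con_compat[OF assms(2)]) auto
qed

lemma pair_ops_model:
  assumes "is_model ar Eqs A F" "is_con ar A F \<alpha>"
  shows "is_model ar Eqs \<alpha> (pair_ops F)"
  unfolding is_model_def
proof (intro conjI pair_ops_alg ballI)
  show "is_alg ar A F"
    using assms(1) unfolding is_model_def by blast
  fix e assume "e \<in> Eqs"
  then obtain s t where e: "e = (s, t)" "sat_id A F s t"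
    using assms(1) unfolding is_model_def by fastforce
  have "sat_id \<alpha> (pair_ops F) s t"
    unfolding sat_id_def
  proof (intro allI impI)
    fix \<sigma> :: "nat \<Rightarrow> _" assume "range \<sigma> \<subseteq> \<alpha>"
    then have "range \<sigma> \<subseteq> A \<times> A"
      using con_subset[OF assms(2)] by blast
    then have "range (fst \<circ> \<sigma>) \<subseteq> A" "range (snd \<circ> \<sigma>) \<subseteq> A"
      by (auto simp: mem_Times_iff)
    with e(2) show "eval (pair_ops F) \<sigma> s = eval (pair_ops F) \<sigma> t"
      unfolding sat_id_def eval_pair_ops by simp
  qed
  with e(1) show "case e of (s, t) \<Rightarrow> sat_id \<alpha> (pair_ops F) s t"
    by simp
qed (use assms in auto)

definition kernel_on :: "'b set \<Rightarrow> ('b \<Rightarrow> 'c) \<Rightarrow> 'b rel" where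
  "kernel_on C g = {(p, q). p \<in> C \<and> q \<in> C \<and> g p = g q}"

lemma kernel_on_is_con:
  assumes alg: "is_alg ar C G" and hom: "\<And>f ps. g (G f ps) = H f (map g ps)"
  shows "is_con ar C G (kernel_on C g)"
proof (rule is_conI)
  fix f xs ys
  assume xs: "length xs = ar f" "length ys = ar f" "\<forall>i<ar f. (xs ! i, ys ! i) \<in> kernel_on C g"
  then have "set xs \<subseteq> C" "set ys \<subseteq> C" "map g xs = map g ys"
    unfolding kernel_on_def by (auto simp: in_set_conv_nth intro: nth_equalityI)
  with xs show "(G f xs, G f ys) \<in> kernel_on C g"
    unfolding kernel_on_def by (simp add: hom alg_op[OF alg])
qed (auto simp: kernel_on_def)

lemma kernel_on_fst_snd: "kernel_on C fst \<inter> kernel_on C snd \<subseteq> Id"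
  unfolding kernel_on_def by (auto simp: prod_eq_iff)

section \<open>The term condition commutator and the Shifting Lemma\<close>

lemma term_cond_total:
  assumes "is_alg ar A F" "\<alpha> \<subseteq> A \<times> A" "\<beta> \<subseteq> A \<times> A"
  shows "term_cond ar F \<alpha> \<beta> (A \<times> A)"
  unfolding term_cond_def
proof (intro allI impI)
  fix t :: "(_, nat + nat) trm" and a b c e :: "nat \<Rightarrow> _"
  assume h: "wf_trm ar t \<and> (\<forall>i. (a i, b i) \<in> \<alpha>) \<and> (\<forall>j. (c j, e j) \<in> \<beta>) \<and>
      (eval F (case_sum a c) t, eval F (case_sum a e) t) \<in> A \<times> A"
  then have "case_sum b c v \<in> A" "case_sum b e v \<in> A" for v
    using assms by (auto split: sum.split)
  with h show "(eval F (case_sum b c) t, eval F (case_sum b e) t) \<in> A \<times> A"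
    using eval_closed[OF assms(1)] by auto
qed

lemma commutator_is_con:
  assumes "is_alg ar A F" "\<alpha> \<subseteq> A \<times> A" "\<beta> \<subseteq> A \<times> A"
  shows "is_con ar A F (commutator ar A F \<alpha> \<beta>)"
  unfolding commutator_def
  using alg_total_con[OF assms(1)] term_cond_total[OF assms] by (intro con_Inter) auto

lemma commutator_least:
  "is_con ar A F \<delta> \<Longrightarrow> term_cond ar F \<alpha> \<beta> \<delta> \<Longrightarrow> commutator ar A F \<alpha> \<beta> \<subseteq> \<delta>"
  unfolding commutator_def by blast

lemma term_cond_commutator: "term_cond ar F \<alpha> \<beta> (commutator ar A F \<alpha> \<beta>)"
  unfolding term_cond_def commutator_def by blast

lemma commutator_mono:
  assumes "is_alg ar A F" "\<alpha> \<subseteq> A \<times> A" "\<beta> \<subseteq> A \<times> A" "\<beta>' \<subseteq> \<beta>"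
  shows "commutator ar A F \<alpha> \<beta>' \<subseteq> commutator ar A F \<alpha> \<beta>"
proof (rule commutator_least[OF commutator_is_con[OF assms(1-3)]])
  show "term_cond ar F \<alpha> \<beta>' (commutator ar A F \<alpha> \<beta>)"
    using term_cond_commutator assms(4) unfolding term_cond_def by blast
qed

lemma term_cond_left:
  assumes "is_con ar A F \<alpha>" "\<beta> \<subseteq> A \<times> A"
  shows "term_cond ar F \<alpha> \<beta> \<alpha>"
  unfolding term_cond_def
proof (intro allI impI)
  fix t :: "(_, nat + nat) trm" and a b c e :: "nat \<Rightarrow> _"
  assume h: "wf_trm ar t \<and> (\<forall>i. (a i, b i) \<in> \<alpha>) \<and> (\<forall>j. (c j, e j) \<in> \<beta>) \<and>
      (eval F (case_sum a c) t, eval F (case_sum a e) t) \<in> \<alpha>"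
  have ce: "c j \<in> A" "e j \<in> A" for j
    using h assms(2) by auto
  have "(case_sum b c v, case_sum a c v) \<in> \<alpha>" "(case_sum a e v, case_sum b e v) \<in> \<alpha>" for v
    using h ce con_refl[OF assms(1)] con_sym[OF assms(1)] by (cases v; simp)+
  then have "(eval F (case_sum b c) t, eval F (case_sum a c) t) \<in> \<alpha>"
      "(eval F (case_sum a e) t, eval F (case_sum b e) t) \<in> \<alpha>"
    using h by (auto intro: eval_con[OF assms(1)])
  with h show "(eval F (case_sum b c) t, eval F (case_sum b e) t) \<in> \<alpha>"
    using con_trans[OF assms(1)] by blast
qed

lemma commutator_subset_left:
  "is_con ar A F \<alpha> \<Longrightarrow> \<beta> \<subseteq> A \<times> A \<Longrightarrow> commutator ar A F \<alpha> \<beta> \<subseteq> \<alpha>"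
  by (simp add: commutator_least term_cond_left)

lemma modular_shift:
  assumes alg: "is_alg ar P G" and modular: "modular_con ar P G"
    and con: "is_con ar P G \<eta>" "is_con ar P G \<eta>'" "is_con ar P G \<delta>"
    and disjoint: "\<eta> \<inter> \<eta>' \<subseteq> Id"
    and pq: "(p, q) \<in> \<eta>" "(p, q) \<in> \<delta>" and pp': "(p, p') \<in> \<eta>'" and qq': "(q, q') \<in> \<eta>'"
    and p'q': "(p', q') \<in> \<eta>"
  shows "(p', q') \<in> \<delta>"
proof -
  let ?J = "con_join ar P G (\<eta> \<inter> \<delta>) \<eta>'"
  have meet: "is_con ar P G (\<eta> \<inter> \<delta>)"
    using con_Int[OF con(1,3)] .
  have "(\<eta> \<inter> \<delta>) \<union> \<eta>' \<subseteq> P \<times> P"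
    using con_subset[OF meet] con_subset[OF con(2)] by (rule Un_least)
  then have J: "is_con ar P G ?J"
    unfolding con_join_def by (rule Cg_is_con[OF alg])
  have gen: "(\<eta> \<inter> \<delta>) \<union> \<eta>' \<subseteq> ?J"
    unfolding con_join_def by (rule Cg_subset)
  have "(p', p) \<in> ?J" "(p, q) \<in> ?J" "(q, q') \<in> ?J"
    using gen pq pp' qq' con_sym[OF con(2) pp'] by blast+
  then have "(p', q') \<in> ?J"
    using con_trans[OF J] by meson
  with p'q' have "(p', q') \<in> ?J \<inter> \<eta>"
    by blast
  also have "\<dots> = con_join ar P G (\<eta> \<inter> \<delta>) (\<eta>' \<inter> \<eta>)"
    using modular meet con(1,2) unfolding modular_con_def by (simp add: Int_lower1)
  also have "\<dots> \<subseteq> \<eta> \<inter> \<delta>"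
    unfolding con_join_def
  proof (rule Cg_least[OF meet])
    show "(\<eta> \<inter> \<delta>) \<union> (\<eta>' \<inter> \<eta>) \<subseteq> \<eta> \<inter> \<delta>"
      using disjoint con_refl[OF meet] con_memD[OF con(1)] by auto
  qed
  finally show ?thesis
    by blast
qed

section \<open>The congruence \<open>\<Delta>\<close> of \<open>A(\<alpha>)\<close> and the commutator \<open>[\<alpha>, 1]\<close>\<close>

locale difference_term_context =
  fixes ar :: "'f \<Rightarrow> nat" and Eqs :: "(('f, nat) trm \<times> ('f, nat) trm) set"
    and d :: "('f, nat) trm" and A :: "'a set" and F :: "'f \<Rightarrow> 'a list \<Rightarrow> 'a"
    and \<alpha> :: "'a rel"
  assumes modular_pairs: "cm_at ar Eqs TYPE('a \<times> 'a)"
    and wf_d: "wf_trm ar d"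
    and difference_term: "diff_term_at ar Eqs d TYPE('a)"
    and model: "is_model ar Eqs A F"
    and alpha_con: "is_con ar A F \<alpha>"
begin

abbreviation "\<Delta> \<equiv> Delta1 ar A F \<alpha>"
abbreviation "\<gamma> \<equiv> commutator ar A F \<alpha> (A \<times> A)"
abbreviation "B_ops \<equiv> quot_ops (pair_ops F) \<Delta>"
abbreviation "B_add x y \<equiv> app3 B_ops d x (diag_class A \<alpha> \<Delta>) y"

lemma alg: "is_alg ar A F"
  using model unfolding is_model_def by blast

lemma alpha_subset: "\<alpha> \<subseteq> A \<times> A"
  using con_subset[OF alpha_con] .

lemma alpha_memD: "(x, y) \<in> \<alpha> \<Longrightarrow> x \<in> A \<and> y \<in> A"
  using con_memD[OF alpha_con] .

lemma alpha_refl: "x \<in> A \<Longrightarrow> (x, x) \<in> \<alpha>"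
  using con_refl[OF alpha_con] .

lemma alpha_sym: "(x, y) \<in> \<alpha> \<Longrightarrow> (y, x) \<in> \<alpha>"
  using con_sym[OF alpha_con] .

lemma alpha_trans: "(x, y) \<in> \<alpha> \<Longrightarrow> (y, z) \<in> \<alpha> \<Longrightarrow> (x, z) \<in> \<alpha>"
  using con_trans[OF alpha_con] .

lemma pair_alg: "is_alg ar \<alpha> (pair_ops F)"
  using pair_ops_alg[OF alg alpha_con] .

lemma pair_modular: "modular_con ar \<alpha> (pair_ops F)"
  using modular_pairs pair_ops_model[OF model alpha_con] unfolding cm_at_def by blast

lemma Delta_is_con: "is_con ar \<alpha> (pair_ops F) \<Delta>"
  unfolding Delta1_def by (rule Cg_is_con[OF pair_alg]) (auto intro: alpha_refl)

lemma Delta_diag: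
  assumes "u \<in> A" "v \<in> A"
  shows "((u, u), (v, v)) \<in> \<Delta>"
proof -
  have "((u, u), (v, v)) \<in> {((u, u), (v, v)) | u v. (u, v) \<in> A \<times> A}"
    using assms by blast
  then show ?thesis
    unfolding Delta1_def using Cg_subset by fast
qed

lemma Delta_memD: "(p, q) \<in> \<Delta> \<Longrightarrow> p \<in> \<alpha> \<and> q \<in> \<alpha>"
  using con_memD[OF Delta_is_con] .

lemma Delta_refl: "p \<in> \<alpha> \<Longrightarrow> (p, p) \<in> \<Delta>"
  using con_refl[OF Delta_is_con] .

lemma Delta_sym: "(p, q) \<in> \<Delta> \<Longrightarrow> (q, p) \<in> \<Delta>"
  using con_sym[OF Delta_is_con] .

lemma Delta_trans: "(p, q) \<in> \<Delta> \<Longrightarrow> (q, r) \<in> \<Delta> \<Longrightarrow> (p, r) \<in> \<Delta>"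
  using con_trans[OF Delta_is_con] .

lemma kernel_fst_is_con: "is_con ar \<alpha> (pair_ops F) (kernel_on \<alpha> fst)"
  by (rule kernel_on_is_con[OF pair_alg]) (simp add: pair_ops_def)

lemma kernel_snd_is_con: "is_con ar \<alpha> (pair_ops F) (kernel_on \<alpha> snd)"
  by (rule kernel_on_is_con[OF pair_alg]) (simp add: pair_ops_def)

lemma Delta_shift_fst:
  assumes "((p, u), (q, u)) \<in> \<Delta>" "(p, w) \<in> \<alpha>"
  shows "((p, w), (q, w)) \<in> \<Delta>"
proof -
  have pu: "(p, u) \<in> \<alpha>" "(q, u) \<in> \<alpha>"
    using Delta_memD[OF assms(1)] by auto
  then have qw: "(q, w) \<in> \<alpha>"
    using assms(2) alpha_sym alpha_trans by blast
  have "kernel_on \<alpha> snd \<inter> kernel_on \<alpha> fst \<subseteq> Id"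
    using kernel_on_fst_snd by blast
  from modular_shift[OF pair_alg pair_modular kernel_snd_is_con kernel_fst_is_con Delta_is_con this
      _ assms(1)] show ?thesis
    using assms(2) pu qw by (simp add: kernel_on_def)
qed

lemma Delta_shift_snd:
  assumes "((z, x), (z, y)) \<in> \<Delta>" "(w, x) \<in> \<alpha>"
  shows "((w, x), (w, y)) \<in> \<Delta>"
proof -
  have zx: "(z, x) \<in> \<alpha>" "(z, y) \<in> \<alpha>"
    using Delta_memD[OF assms(1)] by auto
  then have wy: "(w, y) \<in> \<alpha>"
    using assms(2) alpha_sym alpha_trans by blast
  from modular_shift[OF pair_alg pair_modular kernel_fst_is_con kernel_snd_is_con Delta_is_con
      kernel_on_fst_snd _ assms(1)] show ?thesis
    using assms(2) zx wy by (simp add: kernel_on_def)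
qed

lemma gamma_is_con: "is_con ar A F \<gamma>"
  using commutator_is_con[OF alg alpha_subset] by blast

lemma gamma_subset_alpha: "\<gamma> \<subseteq> \<alpha>"
  using commutator_subset_left[OF alpha_con] by blast

lemma gamma_refl: "x \<in> A \<Longrightarrow> (x, x) \<in> \<gamma>"
  using con_refl[OF gamma_is_con] .

lemma gamma_sym: "(x, y) \<in> \<gamma> \<Longrightarrow> (y, x) \<in> \<gamma>"
  using con_sym[OF gamma_is_con] .

lemma gamma_trans [trans]: "(x, y) \<in> \<gamma> \<Longrightarrow> (y, z) \<in> \<gamma> \<Longrightarrow> (x, z) \<in> \<gamma>"
  using con_trans[OF gamma_is_con] .

lemma d_idem: "a \<in> A \<Longrightarrow> b \<in> A \<Longrightarrow> app3 F d a a b = b"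
  using difference_term model alg_total_con[OF alg] unfolding diff_term_at_def by blast

lemma d_gamma:
  assumes "(a, b) \<in> \<alpha>"
  shows "(app3 F d a b b, a) \<in> \<gamma>"
proof -
  have "(app3 F d a b b, a) \<in> commutator ar A F \<alpha> \<alpha>"
    using difference_term model alpha_con assms unfolding diff_term_at_def by blast
  then show ?thesis
    using commutator_mono[OF alg alpha_subset _ alpha_subset] by blast
qed

definition Delta_trace :: "'a rel" where
  "Delta_trace = {(x, y). ((x, x), (y, x)) \<in> \<Delta>}"

lemma Delta_trace_shift:
  assumes "(x, y) \<in> Delta_trace" "(x, w) \<in> \<alpha>"
  shows "((x, w), (y, w)) \<in> \<Delta>"
  using assms unfolding Delta_trace_def by (blast intro: Delta_shift_fst)

lemma Delta_trace_subset_alpha: "Delta_trace \<subseteq> \<alpha>"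
  unfolding Delta_trace_def using Delta_memD alpha_sym by blast

lemma Delta_trace_is_con: "is_con ar A F Delta_trace"
proof (rule is_conI)
  show "Delta_trace \<subseteq> A \<times> A"
    using Delta_trace_subset_alpha alpha_subset by blast
  show "(x, x) \<in> Delta_trace" if "x \<in> A" for x
    using that unfolding Delta_trace_def by (simp add: Delta_refl alpha_refl)
  show "(y, x) \<in> Delta_trace" if "(x, y) \<in> Delta_trace" for x y
  proof -
    have "(x, y) \<in> \<alpha>"
      using that Delta_trace_subset_alpha by blast
    then have "((x, y), (y, y)) \<in> \<Delta>"
      using Delta_trace_shift[OF that] by blast
    then show ?thesis
      unfolding Delta_trace_def by (blast intro: Delta_sym)
  qed
  show "(x, z) \<in> Delta_trace" if "(x, y) \<in> Delta_trace" "(y, z) \<in> Delta_trace" for x y z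
  proof -
    have "(y, x) \<in> \<alpha>"
      using that(1) Delta_memD unfolding Delta_trace_def by blast
    then have "((y, x), (z, x)) \<in> \<Delta>"
      using Delta_trace_shift[OF that(2)] by blast
    with that(1) show ?thesis
      unfolding Delta_trace_def by (blast intro: Delta_trans)
  qed
  show "(F f xs, F f ys) \<in> Delta_trace"
    if len: "length xs = ar f" "length ys = ar f" and rel: "\<forall>i<ar f. (xs ! i, ys ! i) \<in> Delta_trace"
    for f xs ys
  proof -
    have "(zip xs xs ! i, zip ys xs ! i) \<in> \<Delta>" if "i < ar f" for i
      using rel that len unfolding Delta_trace_def by simp
    then have "(pair_ops F f (zip xs xs), pair_ops F f (zip ys xs)) \<in> \<Delta>"
      using len by (intro con_compat[OF Delta_is_con]) auto
    then show ?thesis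
      unfolding Delta_trace_def pair_ops_def using len by simp
  qed
qed

lemma term_cond_Delta_trace: "term_cond ar F \<alpha> (A \<times> A) Delta_trace"
  unfolding term_cond_def
proof (intro allI impI)
  fix t :: "('f, nat + nat) trm" and a b c e :: "nat \<Rightarrow> 'a"
  assume h: "wf_trm ar t \<and> (\<forall>i. (a i, b i) \<in> \<alpha>) \<and> (\<forall>j. (c j, e j) \<in> A \<times> A) \<and>
      (eval F (case_sum a c) t, eval F (case_sum a e) t) \<in> Delta_trace"
  define tac tbc tae tbe where "tac = eval F (case_sum a c) t" "tbc = eval F (case_sum b c) t"
    "tae = eval F (case_sum a e) t" "tbe = eval F (case_sum b e) t"
  have "(case_sum (\<lambda>i. (a i, b i)) (\<lambda>j. (c j, c j)) v,
      case_sum (\<lambda>i. (a i, b i)) (\<lambda>j. (e j, e j)) v) \<in> \<Delta>" for v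
    using h by (cases v) (simp_all add: Delta_refl Delta_diag)
  then have "(eval (pair_ops F) (case_sum (\<lambda>i. (a i, b i)) (\<lambda>j. (c j, c j))) t,
      eval (pair_ops F) (case_sum (\<lambda>i. (a i, b i)) (\<lambda>j. (e j, e j))) t) \<in> \<Delta>"
    using h by (intro eval_con[OF Delta_is_con]) auto
  then have D: "((tac, tbc), (tae, tbe)) \<in> \<Delta>"
    unfolding eval_pair_ops_case_sum tac_tbc_tae_tbe_def .
  have trace: "(tac, tae) \<in> Delta_trace"
    using h unfolding tac_tbc_tae_tbe_def by blast
  have alpha: "(tac, tbc) \<in> \<alpha>" "(tae, tbe) \<in> \<alpha>" "(tac, tae) \<in> \<alpha>"
    using Delta_memD[OF D] trace Delta_trace_subset_alpha by auto
  have "((tac, tbe), (tae, tbe)) \<in> \<Delta>"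
    by (rule Delta_trace_shift[OF trace]) (rule alpha_trans[OF alpha(3) alpha(2)])
  then have "((tac, tbc), (tac, tbe)) \<in> \<Delta>"
    by (rule Delta_trans[OF D Delta_sym])
  moreover have "tbc \<in> A" "tbe \<in> A"
    using alpha alpha_memD by blast+
  ultimately have "((tbc, tbc), (tbc, tbe)) \<in> \<Delta>" "tbc \<in> A" "tbe \<in> A"
    by (blast intro: Delta_shift_snd alpha_refl)+
  then have "((tbe, tbe), (tbc, tbe)) \<in> \<Delta>"
    by (blast intro: Delta_diag Delta_trans)
  then have "(tbe, tbc) \<in> Delta_trace"
    unfolding Delta_trace_def by simp
  then show "(eval F (case_sum b c) t, eval F (case_sum b e) t) \<in> Delta_trace"
    unfolding tac_tbc_tae_tbe_def by (rule con_sym[OF Delta_trace_is_con])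
qed

lemma gamma_Delta:
  assumes "(x, y) \<in> \<gamma>" "(x, w) \<in> \<alpha>"
  shows "((x, w), (y, w)) \<in> \<Delta>"
proof -
  have "\<gamma> \<subseteq> Delta_trace"
    by (rule commutator_least[OF Delta_trace_is_con term_cond_Delta_trace])
  with assms show ?thesis
    by (blast intro: Delta_trace_shift)
qed

lemma term_cond_gamma_eq:
  fixes s :: "('f, nat + nat) trm"
  assumes "wf_trm ar s" "\<And>i. (a i, b i) \<in> \<alpha>" "\<And>j. c j \<in> A" "\<And>j. e j \<in> A"
    and "eval F (case_sum b c) s = eval F (case_sum b e) s"
  shows "(eval F (case_sum a c) s, eval F (case_sum a e) s) \<in> \<gamma>"
proof -
  have ba: "\<forall>i. (b i, a i) \<in> \<alpha>" and bA: "\<And>i. b i \<in> A"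
    using assms(2) alpha_sym alpha_memD by blast+
  have ce: "\<forall>j. (c j, e j) \<in> A \<times> A"
    using assms(3,4) by blast
  have "(eval F (case_sum b c) s, eval F (case_sum b e) s) \<in> \<gamma>"
    unfolding assms(5) using assms(1,3,4) bA
    by (intro gamma_refl eval_closed[OF alg]) (auto split: sum.split)
  with assms(1) ba ce show ?thesis
    using term_cond_commutator[of ar F \<alpha> "A \<times> A" A] unfolding term_cond_def by blast
qed

lemma d_affine_swap:
  fixes t :: "('f, nat) trm"
  assumes t: "wf_trm ar t" and ab: "\<And>i. (a i, b i) \<in> \<alpha>" and c: "\<And>i. c i \<in> A" and q: "q \<in> A"
  shows "(app3 F d (eval F (\<lambda>i. app3 F d (a i) (b i) (c i)) t)
            (app3 F d (eval F a t) (eval F b t) (eval F c t)) q,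
          app3 F d (eval F (\<lambda>i. app3 F d (a i) (b i) (b i)) t)
            (app3 F d (eval F a t) (eval F b t) (eval F b t)) q) \<in> \<gamma>"
proof -
  \<comment> \<open>\<open>E(x, y, z, q) = d(t(d(x, y, z)), d(t x, t y, t z), q)\<close>: at \<open>x := b\<close> both instances
    below evaluate to \<open>q\<close>, and the term condition transfers their equality to \<open>x := a\<close>.\<close>
  let ?x = "\<lambda>i. Var (Inl (Suc i))" and ?y = "\<lambda>i. Var (Inr (2 * i))" and ?z = "\<lambda>i. Var (Inr (2 * i + 1))"
  let ?E = "app3_trm d (subst (\<lambda>i. app3_trm d (?x i) (?y i) (?z i)) t)
      (app3_trm d (subst ?x t) (subst ?y t) (subst ?z t)) (Var (Inl 0))"
  have wf_E: "wf_trm ar ?E"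
    by (intro wf_app3_trm wf_d wf_subst t) (auto intro: wf_app3_trm wf_d)
  have eval_E: "eval F (case_sum (case_nat q x) Y) ?E =
      app3 F d (eval F (\<lambda>i. app3 F d (x i) (Y (2 * i)) (Y (2 * i + 1))) t)
        (app3 F d (eval F x t) (eval F (\<lambda>i. Y (2 * i)) t) (eval F (\<lambda>i. Y (2 * i + 1)) t)) q"
    for x Y
    by (simp add: eval_app3_trm eval_subst)
  define Yc where "Yc n = (if even n then b (n div 2) else c (n div 2))" for n
  define Yb where "Yb n = b (n div 2)" for n
  have bA: "b i \<in> A" for i
    using ab alpha_memD by blast
  have tA: "eval F b t \<in> A" "eval F c t \<in> A"
    using eval_closed[OF alg t] bA c by auto
  have "eval F (case_sum (case_nat q b) Yc) ?E = q" "eval F (case_sum (case_nat q b) Yb) ?E = q"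
    unfolding eval_E Yc_def Yb_def using d_idem bA c tA q by simp_all
  then have same: "eval F (case_sum (case_nat q b) Yc) ?E = eval F (case_sum (case_nat q b) Yb) ?E"
    by simp
  have x_alpha: "(case_nat q a i, case_nat q b i) \<in> \<alpha>" for i
    using ab q alpha_refl by (cases i) auto
  have Y_A: "Yc j \<in> A" "Yb j \<in> A" for j
    unfolding Yc_def Yb_def using bA c by auto
  have "(eval F (case_sum (case_nat q a) Yc) ?E, eval F (case_sum (case_nat q a) Yb) ?E) \<in> \<gamma>"
    by (rule term_cond_gamma_eq[OF wf_E x_alpha Y_A same])
  then show ?thesis
    unfolding eval_E Yc_def Yb_def by simp
qed

lemma d_alpha:
  assumes "(a, b) \<in> \<alpha>" "c \<in> A"
  shows "(app3 F d a b c, c) \<in> \<alpha>"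
proof -
  have "b \<in> A"
    using assms(1) alpha_memD by blast
  have "(app3 F d a b c, app3 F d b b c) \<in> \<alpha>"
    using assms \<open>b \<in> A\<close> by (intro app3_con[OF alpha_con wf_d] alpha_refl)
  then show ?thesis
    using d_idem[OF \<open>b \<in> A\<close> assms(2)] by simp
qed

lemma d_affine:
  fixes t :: "('f, nat) trm"
  assumes t: "wf_trm ar t" and ab: "\<And>i. (a i, b i) \<in> \<alpha>" and c: "\<And>i. c i \<in> A"
  shows "(app3 F d (eval F a t) (eval F b t) (eval F c t),
      eval F (\<lambda>i. app3 F d (a i) (b i) (c i)) t) \<in> \<gamma>"
proof -
  define P where "P = eval F (\<lambda>i. app3 F d (a i) (b i) (c i)) t"
  define Q where "Q = app3 F d (eval F a t) (eval F b t) (eval F c t)"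
  have tab: "(eval F a t, eval F b t) \<in> \<alpha>"
    using ab by (rule eval_con[OF alpha_con t])
  have tA: "eval F a t \<in> A" "eval F b t \<in> A" "eval F c t \<in> A"
    using tab alpha_memD eval_closed[OF alg t] c by auto
  then have QA: "Q \<in> A"
    unfolding Q_def by (intro app3_closed[OF alg wf_d])
  have "(eval F (\<lambda>i. app3 F d (a i) (b i) (b i)) t, eval F a t) \<in> \<gamma>"
    using d_gamma[OF ab] by (rule eval_con[OF gamma_is_con t])
  then have "(app3 F d (eval F (\<lambda>i. app3 F d (a i) (b i) (b i)) t)
      (app3 F d (eval F a t) (eval F b t) (eval F b t)) Q, app3 F d (eval F a t) (eval F a t) Q) \<in> \<gamma>"
    using d_gamma[OF tab] gamma_refl[OF QA] by (rule app3_con[OF gamma_is_con wf_d])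
  with d_affine_swap[OF t ab c QA] have "(app3 F d P Q Q, Q) \<in> \<gamma>"
    unfolding P_def Q_def d_idem[OF tA(1) QA[unfolded Q_def]] by (rule gamma_trans)
  moreover have "(P, Q) \<in> \<alpha>"
  proof -
    have "(P, eval F c t) \<in> \<alpha>"
      unfolding P_def using d_alpha[OF ab c] by (rule eval_con[OF alpha_con t])
    moreover have "(Q, eval F c t) \<in> \<alpha>"
      unfolding Q_def by (rule d_alpha[OF tab tA(3)])
    ultimately show ?thesis
      using alpha_sym alpha_trans by blast
  qed
  then have "(app3 F d P Q Q, P) \<in> \<gamma>"
    by (rule d_gamma)
  ultimately show ?thesis
    unfolding P_def[symmetric] Q_def[symmetric] using gamma_sym gamma_trans by blast
qed

lemma d_affine_op:
  assumes len: "length as = ar f" "length bs = ar f" "length cs = ar f"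
    and ab: "\<And>i. i < ar f \<Longrightarrow> (as ! i, bs ! i) \<in> \<alpha>" and c: "set cs \<subseteq> A"
  shows "(app3 F d (F f as) (F f bs) (F f cs),
      F f (map (\<lambda>i. app3 F d (as ! i) (bs ! i) (cs ! i)) [0..<ar f])) \<in> \<gamma>"
proof -
  obtain x0 where x0: "x0 \<in> A"
    using alg unfolding is_alg_def by blast
  define ext where "ext xs i = (if i < ar f then xs ! i else x0)" for xs :: "'a list" and i
  let ?t = "Op f (map Var [0..<ar f]) :: ('f, nat) trm"
  have eval_t: "eval F (ext xs) ?t = F f xs" if "length xs = ar f" for xs
    using that unfolding ext_def by (simp add: comp_def) (intro arg_cong[where f="F f"] nth_equalityI; simp)
  have "eval F (\<lambda>i. app3 F d (ext as i) (ext bs i) (ext cs i)) ?t =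
      F f (map (\<lambda>i. app3 F d (as ! i) (bs ! i) (cs ! i)) [0..<ar f])"
    unfolding ext_def by (simp add: comp_def) (intro arg_cong[where f="F f"] map_cong; simp)
  moreover have "(ext as i, ext bs i) \<in> \<alpha>" "ext cs i \<in> A" for i
    unfolding ext_def using ab alpha_refl[OF x0] c len x0 by (auto simp: nth_mem subset_iff)
  ultimately show ?thesis
    using d_affine[of ?t "ext as" "ext bs" "ext cs"] eval_t len by simp
qed

lemma d_cancel:
  assumes ab: "(a, b) \<in> \<alpha>" and e: "e \<in> A" and g: "g \<in> A"
  shows "(app3 F d (app3 F d a b e) e g, app3 F d a b g) \<in> \<gamma>"
proof -
  define v where "v x y z i = (if i = (0::nat) then x else if i = 1 then y else z)" for x y z :: 'a and i
  have app3_v: "app3 F d x y z = eval F (v x y z) d" for x y z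
    unfolding app3_def v_def ..
  have A: "a \<in> A" "b \<in> A"
    using ab alpha_memD by blast+
  have "(v a b e i, v b b e i) \<in> \<alpha>" "v b b g i \<in> A" for i
    unfolding v_def using ab alpha_refl A e g by auto
  then have "(app3 F d (eval F (v a b e) d) (eval F (v b b e) d) (eval F (v b b g) d),
      eval F (\<lambda>i. app3 F d (v a b e i) (v b b e i) (v b b g i)) d) \<in> \<gamma>"
    by (rule d_affine[OF wf_d])
  moreover have "(\<lambda>i. app3 F d (v a b e i) (v b b e i) (v b b g i)) = v (app3 F d a b b) b g"
    unfolding v_def using d_idem A e g by auto
  ultimately have "(app3 F d (app3 F d a b e) e g, app3 F d (app3 F d a b b) b g) \<in> \<gamma>"
    using d_idem A e g by (simp add: app3_v[symmetric])
  moreover have "(app3 F d (app3 F d a b b) b g, app3 F d a b g) \<in> \<gamma>"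
    using d_gamma[OF ab] gamma_refl A g by (intro app3_con[OF gamma_is_con wf_d])
  ultimately show ?thesis
    by (rule gamma_trans)
qed

definition d_rel :: "('a \<times> 'a) rel" where
  "d_rel = {((a, b), (c, e)). (a, b) \<in> \<alpha> \<and> (c, e) \<in> \<alpha> \<and> (app3 F d a b e, c) \<in> \<gamma>}"

lemma d_rel_sym:
  assumes "((a, b), (c, e)) \<in> d_rel"
  shows "((c, e), (a, b)) \<in> d_rel"
proof -
  have ab: "(a, b) \<in> \<alpha>" "(c, e) \<in> \<alpha>" and g: "(app3 F d a b e, c) \<in> \<gamma>"
    using assms unfolding d_rel_def by auto
  then have A: "b \<in> A" "e \<in> A"
    using alpha_memD by blast+
  have "(app3 F d c e b, app3 F d (app3 F d a b e) e b) \<in> \<gamma>"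
    using gamma_sym[OF g] gamma_refl A by (intro app3_con[OF gamma_is_con wf_d])
  also have "(app3 F d (app3 F d a b e) e b, app3 F d a b b) \<in> \<gamma>"
    using d_cancel ab A by blast
  also have "(app3 F d a b b, a) \<in> \<gamma>"
    using d_gamma ab by blast
  finally show ?thesis
    using ab unfolding d_rel_def by simp
qed

lemma d_rel_trans:
  assumes "((a, b), (c, e)) \<in> d_rel" "((c, e), (h, g)) \<in> d_rel"
  shows "((a, b), (h, g)) \<in> d_rel"
proof -
  have ab: "(a, b) \<in> \<alpha>" "(c, e) \<in> \<alpha>" "(h, g) \<in> \<alpha>"
    and g: "(app3 F d a b e, c) \<in> \<gamma>" "(app3 F d c e g, h) \<in> \<gamma>"
    using assms unfolding d_rel_def by auto
  then have A: "e \<in> A" "g \<in> A"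
    using alpha_memD by blast+
  have "(app3 F d a b g, app3 F d (app3 F d a b e) e g) \<in> \<gamma>"
    using d_cancel[OF ab(1) A] by (rule gamma_sym)
  also have "(app3 F d (app3 F d a b e) e g, app3 F d c e g) \<in> \<gamma>"
    using g(1) gamma_refl A by (intro app3_con[OF gamma_is_con wf_d])
  also note g(2)
  finally show ?thesis
    using ab unfolding d_rel_def by simp
qed

lemma d_rel_compat:
  assumes len: "length ps = ar f" "length qs = ar f"
    and rel: "\<And>i. i < ar f \<Longrightarrow> (ps ! i, qs ! i) \<in> d_rel"
  shows "(pair_ops F f ps, pair_ops F f qs) \<in> d_rel"
proof -
  have in_alpha: "ps ! i \<in> \<alpha>" "qs ! i \<in> \<alpha>" if "i < ar f" for i
    using rel[OF that] unfolding d_rel_def by auto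
  then have "set ps \<subseteq> \<alpha>" "set qs \<subseteq> \<alpha>"
    using len by (metis in_set_conv_nth subsetI)+
  then have pair_alpha: "pair_ops F f ps \<in> \<alpha>" "pair_ops F f qs \<in> \<alpha>"
    using len alg_op[OF pair_alg] by blast+
  let ?ds = "map (\<lambda>i. app3 F d (map fst ps ! i) (map snd ps ! i) (map snd qs ! i)) [0..<ar f]"
  have "(app3 F d (F f (map fst ps)) (F f (map snd ps)) (F f (map snd qs)), F f ?ds) \<in> \<gamma>"
  proof (rule d_affine_op)
    show "(map fst ps ! i, map snd ps ! i) \<in> \<alpha>" if "i < ar f" for i
      using in_alpha(1)[OF that] that len by simp
    show "set (map snd qs) \<subseteq> A"
      using \<open>set qs \<subseteq> \<alpha>\<close> alpha_subset by auto
  qed (use len in simp_all)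
  also have "(F f ?ds, F f (map fst qs)) \<in> \<gamma>"
  proof (rule con_compat[OF gamma_is_con])
    show "(?ds ! i, map fst qs ! i) \<in> \<gamma>" if "i < ar f" for i
      using rel[OF that] that len unfolding d_rel_def by (auto simp: case_prod_beta)
  qed (use len in simp_all)
  finally show ?thesis
    using pair_alpha unfolding d_rel_def pair_ops_def by simp
qed

lemma d_rel_is_con: "is_con ar \<alpha> (pair_ops F) d_rel"
proof (rule is_conI)
  show "d_rel \<subseteq> \<alpha> \<times> \<alpha>"
    unfolding d_rel_def by auto
  show "(p, p) \<in> d_rel" if "p \<in> \<alpha>" for p
    using that d_gamma unfolding d_rel_def by auto
  show "(q, p) \<in> d_rel" if "(p, q) \<in> d_rel" for p q
    using that d_rel_sym by (cases p, cases q) simp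
  show "(p, r) \<in> d_rel" if "(p, q) \<in> d_rel" "(q, r) \<in> d_rel" for p q r
    using that d_rel_trans by (cases p, cases q, cases r) simp
qed (simp add: d_rel_compat)

lemma Delta_gamma:
  assumes "((x, w), (y, w)) \<in> \<Delta>"
  shows "(x, y) \<in> \<gamma>"
proof -
  have "\<Delta> \<subseteq> d_rel"
    unfolding Delta1_def using d_idem gamma_refl
    by (intro Cg_least[OF d_rel_is_con]) (auto simp: d_rel_def intro: alpha_refl)
  with assms have "(app3 F d x w w, y) \<in> \<gamma>" "(x, w) \<in> \<alpha>"
    unfolding d_rel_def by auto
  then show ?thesis
    using d_gamma gamma_sym gamma_trans by blast
qed

lemma Delta_iff_gamma:
  assumes "(x, w) \<in> \<alpha>"
  shows "((x, w), (y, w)) \<in> \<Delta> \<longleftrightarrow> (x, y) \<in> \<gamma>"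
  using assms Delta_gamma gamma_Delta by blast

section \<open>The representation of \<open>A/[\<alpha>, 1]\<close>\<close>

definition emb :: "'a \<Rightarrow> ('a \<times> 'a) set \<times> 'a set" where
  "emb x = (\<Delta> `` {(x, rep (\<alpha> `` {x}))}, \<alpha> `` {x})"

lemma emb_eq_iff:
  assumes "x \<in> A" "y \<in> A"
  shows "emb x = emb y \<longleftrightarrow> (x, y) \<in> \<gamma>"
proof -
  let ?r = "rep (\<alpha> `` {x})"
  have xr: "(x, ?r) \<in> \<alpha>"
    by (rule rep_Image[OF alpha_con assms(1)])
  have "emb x = emb y \<longleftrightarrow> \<alpha> `` {x} = \<alpha> `` {y} \<and> \<Delta> `` {(x, ?r)} = \<Delta> `` {(y, ?r)}"
    unfolding emb_def by auto
  also have "\<dots> \<longleftrightarrow> (x, y) \<in> \<alpha> \<and> ((x, ?r), (y, ?r)) \<in> \<Delta>"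
  proof
    assume classes: "\<alpha> `` {x} = \<alpha> `` {y} \<and> \<Delta> `` {(x, ?r)} = \<Delta> `` {(y, ?r)}"
    then have "(x, y) \<in> \<alpha>"
      using con_Image_eqD[OF alpha_con assms(2)] alpha_sym by metis
    moreover have "(y, ?r) \<in> \<alpha>"
      using \<open>(x, y) \<in> \<alpha>\<close> xr alpha_sym alpha_trans by blast
    ultimately show "(x, y) \<in> \<alpha> \<and> ((x, ?r), (y, ?r)) \<in> \<Delta>"
      using classes con_Image_eqD[OF Delta_is_con] con_sym[OF Delta_is_con] by metis
  qed (use con_Image_eq[OF alpha_con] con_Image_eq[OF Delta_is_con] in blast)
  also have "\<dots> \<longleftrightarrow> (x, y) \<in> \<gamma>"
    using Delta_iff_gamma[OF xr] gamma_subset_alpha by blast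
  finally show ?thesis .
qed

lemma emb_mem:
  assumes "x \<in> A"
  shows "emb x \<in> (\<alpha> // \<Delta>) \<times> (A // \<alpha>)"
  using rep_Image[OF alpha_con assms] assms unfolding emb_def by (simp add: quotientI)

lemma emb_d_rep:
  assumes ab: "(a, b) \<in> \<alpha>" and v: "v \<in> A"
  shows "emb (app3 F d a b (rep (\<alpha> `` {v}))) = (\<Delta> `` {(a, b)}, \<alpha> `` {v})"
proof -
  define r where "r = rep (\<alpha> `` {v})"
  define x where "x = app3 F d a b r"
  have vr: "(v, r) \<in> \<alpha>"
    unfolding r_def by (rule rep_Image[OF alpha_con v])
  then have A: "a \<in> A" "b \<in> A" "r \<in> A"
    using ab alpha_memD by blast+
  have "(x, r) \<in> \<alpha>"
    unfolding x_def using ab A(3) by (rule d_alpha)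
  then have "(x, v) \<in> \<alpha>"
    using vr alpha_sym alpha_trans by blast
  then have alpha_class: "\<alpha> `` {x} = \<alpha> `` {v}"
    by (rule con_Image_eq[OF alpha_con])
  have "(app3 (pair_ops F) d (a, b) (b, b) (r, r), app3 (pair_ops F) d (a, b) (b, b) (b, b)) \<in> \<Delta>"
    using ab A by (intro app3_con[OF Delta_is_con wf_d] Delta_refl Delta_diag alpha_refl)
  then have xr_Delta: "((x, r), (app3 F d a b b, b)) \<in> \<Delta>"
    unfolding app3_pair_ops x_def using d_idem A by simp
  moreover have "((app3 F d a b b, b), (a, b)) \<in> \<Delta>"
    using Delta_memD[OF xr_Delta] d_gamma[OF ab] by (simp add: Delta_iff_gamma)
  ultimately have "((x, r), (a, b)) \<in> \<Delta>"
    by (rule Delta_trans)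
  then have "\<Delta> `` {(x, r)} = \<Delta> `` {(a, b)}"
    by (rule con_Image_eq[OF Delta_is_con])
  then have "emb x = (\<Delta> `` {(a, b)}, \<alpha> `` {v})"
    unfolding emb_def alpha_class r_def[symmetric] by simp
  then show ?thesis
    unfolding x_def r_def .
qed

lemma emb_image: "emb ` A = (\<alpha> // \<Delta>) \<times> (A // \<alpha>)"
proof
  show "emb ` A \<subseteq> (\<alpha> // \<Delta>) \<times> (A // \<alpha>)"
    using emb_mem by blast
  show "(\<alpha> // \<Delta>) \<times> (A // \<alpha>) \<subseteq> emb ` A"
  proof
    fix P assume "P \<in> (\<alpha> // \<Delta>) \<times> (A // \<alpha>)"
    then obtain a b v where P: "P = (\<Delta> `` {(a, b)}, \<alpha> `` {v})" "(a, b) \<in> \<alpha>" "v \<in> A"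
      by (metis SigmaE quotientE surj_pair)
    then have "app3 F d a b (rep (\<alpha> `` {v})) \<in> A"
      using rep_Image[OF alpha_con] alpha_memD by (blast intro: app3_closed[OF alg wf_d])
    with emb_d_rep[OF P(2,3)] show "P \<in> emb ` A"
      unfolding P(1) by (metis image_eqI)
  qed
qed

lemma diag_class_eq:
  assumes "c \<in> A"
  shows "diag_class A \<alpha> \<Delta> = \<Delta> `` {(c, c)}"
  unfolding diag_class_def
proof (rule the_equality)
  show "\<Delta> `` {(c, c)} \<in> \<alpha> // \<Delta> \<and> (\<forall>u\<in>A. (u, u) \<in> \<Delta> `` {(c, c)})"
    using assms by (simp add: quotientI alpha_refl Delta_diag)
  fix X assume X: "X \<in> \<alpha> // \<Delta> \<and> (\<forall>u\<in>A. (u, u) \<in> X)"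
  then obtain p where "X = \<Delta> `` {p}" "p \<in> \<alpha>"
    by (blast elim: quotientE)
  moreover have "(c, c) \<in> X"
    using X assms by blast
  ultimately show "X = \<Delta> `` {(c, c)}"
    using con_Image_eq[OF Delta_is_con] by simp
qed

definition factor_set :: "'f \<Rightarrow> 'a set list \<Rightarrow> ('a \<times> 'a) set" where
  "factor_set f qs = \<Delta> `` {(F f (map rep qs), rep (quot_ops F \<alpha> f qs))}"

lemma factor_set_mem:
  assumes "length qs = ar f" "set qs \<subseteq> A // \<alpha>"
  shows "factor_set f qs \<in> \<alpha> // \<Delta>"
proof -
  have "set (map rep qs) \<subseteq> A"
    using assms(2) rep_quotient(1)[OF alpha_con] by auto
  then have "F f (map rep qs) \<in> A"
    using alg_op[OF alg] assms(1) by simp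
  then have "(F f (map rep qs), rep (quot_ops F \<alpha> f qs)) \<in> \<alpha>"
    unfolding quot_ops_rep by (rule rep_Image[OF alpha_con])
  then show ?thesis
    unfolding factor_set_def by (rule quotientI)
qed

lemma Delta_class_add:
  assumes "(x, y) \<in> \<alpha>" "(y, z) \<in> \<alpha>"
  shows "B_add (\<Delta> `` {(x, y)}) (\<Delta> `` {(y, z)}) = \<Delta> `` {(x, z)}"
proof -
  have A: "y \<in> A" "z \<in> A"
    using assms alpha_memD by blast+
  have "B_add (\<Delta> `` {(x, y)}) (\<Delta> `` {(y, z)}) = \<Delta> `` {(app3 F d x y y, z)}"
    unfolding diag_class_eq[OF A(1)] app3_quot_ops[OF pair_alg Delta_is_con wf_d assms(1)
        alpha_refl[OF A(1)] assms(2)] app3_pair_ops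
    using d_idem A by simp
  also have "\<dots> = \<Delta> `` {(x, z)}"
  proof (rule con_Image_eq[OF Delta_is_con])
    have "(app3 F d x y y, z) \<in> \<alpha>"
      using d_alpha[OF assms(1) A(1)] assms(2) alpha_trans by blast
    then show "((app3 F d x y y, z), (x, z)) \<in> \<Delta>"
      using d_gamma[OF assms(1)] by (simp add: Delta_iff_gamma)
  qed
  finally show ?thesis .
qed

lemma emb_hom:
  assumes len: "length ys = ar f" and ys: "set ys \<subseteq> A"
  shows "emb (F f ys) = tensor_ops B_ops (\<lambda>x y. B_add x y) factor_set (quot_ops F \<alpha>) f (map emb ys)"
proof -
  define qs where "qs = map (\<lambda>y. \<alpha> `` {y}) ys"
  define c where "c = F f (map rep qs)"
  define w where "w = rep (\<alpha> `` {F f ys})"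
  let ?ps = "map (\<lambda>y. (y, rep (\<alpha> `` {y}))) ys"
  have ps: "set ?ps \<subseteq> \<alpha>"
    using rep_Image[OF alpha_con] ys by auto
  have pair: "pair_ops F f ?ps = (F f ys, c)"
    unfolding pair_ops_def c_def qs_def by (simp add: comp_def)
  have "map fst (map emb ys) = map (\<lambda>p. \<Delta> `` {p}) ?ps"
    unfolding emb_def by simp
  then have "B_ops f (map fst (map emb ys)) = \<Delta> `` {pair_ops F f ?ps}"
    using len ps by (simp only:) (rule quot_ops_Image[OF Delta_is_con]; simp)
  then have fst_part: "B_ops f (map fst (map emb ys)) = \<Delta> `` {(F f ys, c)}"
    unfolding pair .
  have snd_part: "map snd (map emb ys) = qs"
    unfolding emb_def qs_def by simp
  have FQ: "quot_ops F \<alpha> f qs = \<alpha> `` {F f ys}"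
    unfolding qs_def using quot_ops_Image[OF alpha_con len ys] .
  have T: "factor_set f qs = \<Delta> `` {(c, w)}"
    unfolding factor_set_def FQ c_def w_def ..
  have yc: "(F f ys, c) \<in> \<alpha>"
    using alg_op[OF pair_alg _ ps, of f] len unfolding pair by simp
  moreover have "(c, w) \<in> \<alpha>"
    using yc rep_Image[OF alpha_con alg_op[OF alg len ys]] alpha_sym alpha_trans
    unfolding w_def by blast
  ultimately show ?thesis
    unfolding tensor_ops_def fst_part snd_part T FQ by (simp add: Delta_class_add emb_def w_def)
qed

end

theorem theorem2p6:
  fixes ar :: "'f \<Rightarrow> nat"
    and Eqs :: "(('f, nat) trm \<times> ('f, nat) trm) set"
    and d :: "('f, nat) trm"
    and A :: "'a set" and F :: "'f \<Rightarrow> 'a list \<Rightarrow> 'a"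
    and \<alpha> :: "'a rel"
  assumes wf_Eqs: "\<forall>(s, t) \<in> Eqs. wf_trm ar s \<and> wf_trm ar t"
    and cm: "cm_at ar Eqs TYPE('a)" "cm_at ar Eqs TYPE('a \<times> 'a)"
            "cm_at ar Eqs TYPE(('f, nat) trm set)"
    and wf_d: "wf_trm ar d"
    and dt: "diff_term_at ar Eqs d TYPE('a)" "diff_term_at ar Eqs d TYPE('a \<times> 'a)"
            "diff_term_at ar Eqs d TYPE(('f, nat) trm set)"
    and A: "is_model ar Eqs A F"
    and \<alpha>: "is_con ar A F \<alpha>"
  shows "let \<Delta> = Delta1 ar A F \<alpha>;
             FB = quot_ops (pair_ops F) \<Delta>;
             zero = diag_class A \<alpha> \<Delta>;
             pl = (\<lambda>x y. app3 FB d x zero y);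
             \<gamma> = commutator ar A F \<alpha> (A \<times> A)
         in \<exists>T :: 'f \<Rightarrow> 'a set list \<Rightarrow> ('a \<times> 'a) set.
              (\<forall>f qs. length qs = ar f \<and> set qs \<subseteq> A // \<alpha> \<longrightarrow> T f qs \<in> \<alpha> // \<Delta>) \<and>
              iso ar (A // \<gamma>) (quot_ops F \<gamma>)
                     ((\<alpha> // \<Delta>) \<times> (A // \<alpha>)) (tensor_ops FB pl T (quot_ops F \<alpha>))"
proof -
  \<comment> \<open>Only modularity at the type of \<open>A(\<alpha>)\<close> and the difference term laws in \<open>A\<close> are used.\<close>
  interpret difference_term_context ar Eqs d A F \<alpha>
    using cm(2) wf_d dt(1) A \<alpha> by unfold_locales
  have "iso ar (A // \<gamma>) (quot_ops F \<gamma>) ((\<alpha> // \<Delta>) \<times> (A // \<alpha>))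
      (tensor_ops B_ops (\<lambda>x y. B_add x y) factor_set (quot_ops F \<alpha>))"
    using emb_eq_iff by (intro iso_quotientI[OF gamma_is_con alg emb_image] emb_hom) simp_all
  then show ?thesis
    unfolding Let_def using factor_set_mem by blast
qed

end
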